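(* Let $a$, $b$, $c$ be positive integers with $c$ even. Then for all integers $p,q\geq1$ and all $x,y,z\in\mathbb{R}$, \begin{align*} a^{1-p}b^{1-q}S^{(2)}_{p,q}(a,b,c:x,y,z) &=-\frac{q}{2}\sum_{j=0}^{p}\binom{p}{j}a^{1-j}c^{1+j-p-q}S^{(1)}_{p+q-j,j}(c,-a,b:z,x,y)\\ &\quad-\frac{p}{2}\sum_{h=0}^{q}\binom{q}{h}(-1)^{h}b^{1-h}c^{1+h-p-q}S^{(1)}_{p+q-h,h}(c,b,a:z,-y,x). \end{align*}
   Context: $B_n(x)$ is the $n$th Bernoulli polynomial ($\frac{te^{xt}}{e^t-1}=\sum B_n(x)\frac{t^n}{n!}$) and $\mathcal{B}_n(x)=B_n(x-[x])$ the $n$th Bernoulli function ($[x]$ the largest integer $\le x$; $\mathcal{B}_0\equiv1$). $E_n(x)$ is the $n$th Euler polynomial ($\frac{2e^{xt}}{e^t+1}=\sum E_n(x)\frac{t^n}{n!}$), and the Euler function $\mathcal{E}_n$ ($n\ge0$) is defined by $\mathcal{E}_n(x)=E_n(x)$ for $0\le x<1$ and $\mathcal{E}_n(x+m)=(-1)^m\mathcal{E}_n(x)$ for $m\in\mathbb{Z}$. For integers $a,b$, a positive integer $c$, and real $x,y,z$ define, for integers $p\ge1$, $q\ge0$, $$S^{(1)}_{p,q}(a,b,c:x,y,z)=\sum_{\mu=0}^{c-1}\mathcal{E}_{p-1}\Big(a\frac{\mu+z}{c}+x\Big)\mathcal{B}_{q}\Big(b\frac{\mu+z}{c}+y\Big),$$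 and, for integers $p,q\ge1$, $$S^{(2)}_{p,q}(a,b,c:x,y,z)=\sum_{\mu=0}^{c-1}(-1)^{\mu}\mathcal{B}_{p}\Big(a\frac{\mu+z}{c}+x\Big)\mathcal{B}_{q}\Big(b\frac{\mu+z}{c}+y\Big).$$ *)

theory Defs
  imports "HOL-Computational_Algebra.Formal_Power_Series"
begin

definition bernpoly :: "nat \<Rightarrow> real \<Rightarrow> real" where
  "bernpoly n x = fact n * fps_nth ((fps_X * fps_exp x) / (fps_exp 1 - 1)) n"

definition eulerpoly :: "nat \<Rightarrow> real \<Rightarrow> real" where
  "eulerpoly n x = fact n * fps_nth ((2 * fps_exp x) / (fps_exp 1 + 1)) n"

definition bernfun :: "nat \<Rightarrow> real \<Rightarrow> real" where
  "bernfun n x = bernpoly n (x - of_int \<lfloor>x\<rfloor>)"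

definition eulerfun :: "nat \<Rightarrow> real \<Rightarrow> real" where
  "eulerfun n x = (-1) powi \<lfloor>x\<rfloor> * eulerpoly n (x - of_int \<lfloor>x\<rfloor>)"

text \<open>S^(1)_{p,q}(a,b,c:x,y,z), meaningful for p >= 1\<close>
definition S1 :: "nat \<Rightarrow> nat \<Rightarrow> int \<Rightarrow> int \<Rightarrow> int \<Rightarrow> real \<Rightarrow> real \<Rightarrow> real \<Rightarrow> real" where
  "S1 p q a b c x y z =
     (\<Sum>\<mu>\<in>{0..<c}. eulerfun (p - 1) (of_int a * (of_int \<mu> + z) / of_int c + x)
                   * bernfun q (of_int b * (of_int \<mu> + z) / of_int c + y))"

definition S2 :: "nat \<Rightarrow> nat \<Rightarrow> int \<Rightarrow> int \<Rightarrow> int \<Rightarrow> real \<Rightarrow> real \<Rightarrow> real \<Rightarrow> real" where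
  "S2 p q a b c x y z =
     (\<Sum>\<mu>\<in>{0..<c}. (-1) powi \<mu>
                   * bernfun p (of_int a * (of_int \<mu> + z) / of_int c + x)
                   * bernfun q (of_int b * (of_int \<mu> + z) / of_int c + y))"

end

theory Submission
  imports Defs "HOL-Computational_Algebra.Formal_Laurent_Series"
begin

text \<open>
  Write bern_gf u k = e^(frac u * k X) / (e^(k X) - 1) for the Laurent series that generates the
  Bernoulli functions. Three identities carry the proof: the multiplication formula
  sum_(j<N) bern_gf ((w + j) / N) (N k) = bern_gf w k; its alternating version for even N, whose
  value is the generating function of the Euler functions; and the partial fraction identity
  bern_gf s A * bern_gf t B
    = bern_gf (s - t) A * bern_gf t (A + B) - bern_gf (s - t) (-B) * bern_gf s (A + B).
  Expanding both factors in the generating function of S2 by the multiplication formula, applying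
  the product identity and then summing over mu with the alternating formula gives a reciprocity law
  between generating functions. Its coefficient of X^(p+q), taken at the scales A/a and 1/b, is a
  polynomial identity in A whose coefficient of A^p is the theorem; the binomial sums come from
  expanding the powers of A + 1.
\<close>

section \<open>Exponentials as Laurent series\<close>

definition fls_exp :: "'a::field_char_0 \<Rightarrow> 'a fls" where
  "fls_exp r = fps_to_fls (fps_exp r)"

lemma fls_exp_add: "fls_exp (r + s) = fls_exp r * fls_exp s"
  by (simp add: fls_exp_def fps_exp_add_mult fls_times_fps_to_fls)

lemma fls_exp_zero [simp]: "fls_exp 0 = 1"
  by (simp add: fls_exp_def)

lemma fls_exp_neq_0 [simp]: "fls_exp r \<noteq> 0"
proof -
  have "fps_exp r $ 0 \<noteq> 0" by simp
  then show ?thesis by (metis fls_exp_def fps_to_fls_eq_0_iff fps_zero_nth)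
qed

lemma fls_exp_diff: "fls_exp (r - s) = fls_exp r / fls_exp s"
  using fls_exp_add[of "r - s" s] by (simp add: field_simps)

lemma fls_exp_power: "fls_exp r ^ n = fls_exp (of_nat n * r)"
  by (simp add: fls_exp_def fps_to_fls_power [symmetric] fps_exp_power_mult)

lemma fls_exp_neq_1: "r \<noteq> 0 \<Longrightarrow> fls_exp r \<noteq> 1"
proof -
  assume "r \<noteq> 0"
  then have "fps_exp r $ 1 \<noteq> (1 :: 'a fps) $ 1" by simp
  then show ?thesis by (metis fls_exp_def fps_to_fls_eq_1_iff)
qed

lemma fls_exp_add_1_neq_0: "fls_exp r + 1 \<noteq> 0"
proof -
  have "(fps_exp r + 1) $ 0 \<noteq> 0" by simp
  then have "fps_to_fls (fps_exp r + 1) \<noteq> 0" by (metis fps_to_fls_eq_0_iff fps_zero_nth)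
  then show ?thesis by (simp add: fls_exp_def)
qed

lemma fps_to_fls_sum: "fps_to_fls (\<Sum>i\<in>I. f i) = (\<Sum>i\<in>I. fps_to_fls (f i))"
  by (induction I rule: infinite_finite_induct) simp_all

section \<open>Generating functions of the Bernoulli and Euler functions\<close>

lemma sum_mod_shift:
  fixes N m :: int and h :: "int \<Rightarrow> 'a::comm_monoid_add"
  assumes "N > 0"
  shows "(\<Sum>k\<in>{0..<N}. h ((m + k) mod N)) = (\<Sum>r\<in>{0..<N}. h r)"
  by (rule sum.reindex_bij_witness[where i = "\<lambda>r. (r - m) mod N" and j = "\<lambda>k. (m + k) mod N"])
    (use assms in \<open>auto simp: mod_simps\<close>)

lemma sum_int_atLeastLessThan:
  fixes N :: int
  assumes "N \<ge> 0"
  shows "(\<Sum>r\<in>{0..<N}. h r) = (\<Sum>i<nat N. h (int i))"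
  by (rule sum.reindex_bij_witness[where i = int and j = nat]) (use assms in auto)

lemma frac_shift_divide:
  fixes N k :: int and u :: real
  assumes "N > 0"
  shows "of_int N * frac ((u + of_int k) / of_int N) = frac u + of_int ((\<lfloor>u\<rfloor> + k) mod N)"
proof -
  have "\<lfloor>(u + of_int k) / of_int N\<rfloor> = (\<lfloor>u\<rfloor> + k) div N"
    using assms by (simp add: floor_divide_real_eq_div)
  then have "of_int N * frac ((u + of_int k) / of_int N)
      = u + of_int k - of_int (N * ((\<lfloor>u\<rfloor> + k) div N))"
    using assms by (simp add: frac_def field_simps)
  also have "\<dots> = frac u + of_int ((\<lfloor>u\<rfloor> + k) mod N)"
    by (simp add: frac_def minus_div_mult_eq_mod [symmetric] mult.commute)
  finally show ?thesis .
qed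

lemma sum_frac_shift_divide:
  fixes N :: int and w :: real
  assumes "N > 0"
  shows "(\<Sum>j\<in>{0..<N}. h ((\<lfloor>w\<rfloor> + j) mod N) (of_int N * frac ((w + of_int j) / of_int N)))
    = (\<Sum>r\<in>{0..<N}. h r (frac w + of_int r))"
  using sum_mod_shift[OF assms, of "\<lambda>r. h r (frac w + of_int r)"]
  by (simp add: frac_shift_divide[OF assms])

lemma minus_one_power_int_mod_even:
  fixes c k l :: int
  assumes "even c"
  shows "(-1::'a::division_ring) powi l = (-1) powi k * (-1) powi ((k + l) mod c)"
proof -
  have "even ((k + l) mod c) \<longleftrightarrow> even (k + l)"
    using assms by (metis dvd_mod_iff dvd_add_right_iff mod_mod_trivial)
  then show ?thesis
    by (auto simp: power_int_minus_left)
qed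

(* The two admissible values of (e, e') come from frac (s - t) = frac s - frac t + eps,
   where eps is 0 or 1. *)
lemma partial_fraction_product:
  fixes P Q u v u' v' e e' :: "'a::field"
  assumes "e = 1 \<and> e' = 1 \<or> e = P \<and> e' = Q"
    and "P \<noteq> 1" "Q \<noteq> 1" "P * Q \<noteq> 1" "Q \<noteq> 0" "u' \<noteq> 0" "v' \<noteq> 0"
  shows "u / (P - 1) * (v / (Q - 1))
    = u * e / u' / (P - 1) * (u' * v / (P * Q - 1))
      - v / (v' * e') / (1 / Q - 1) * (u * v' / (P * Q - 1))"
proof -
  have "P - 1 \<noteq> 0" "Q - 1 \<noteq> 0" "P * Q - 1 \<noteq> 0" "1 - Q \<noteq> 0"
    using assms by auto
  with assms(1,5-7) show ?thesis
    by (auto simp: divide_simps) (auto simp: algebra_simps)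
qed

(* Up to normalisation these generate the Bernoulli and Euler functions:
     k X * bern_gf u k = sum_n bernfun n u (k X)^n / n!,
     2 * euler_gf u k = sum_n eulerfun n u (k X)^n / n!
   (fps_to_fls_egf_bernfun, fps_to_fls_egf_eulerfun). *)
definition bern_gf :: "real \<Rightarrow> real \<Rightarrow> real fls" where
  "bern_gf u k = fls_exp (frac u * k) / (fls_exp k - 1)"

definition euler_gf :: "real \<Rightarrow> real \<Rightarrow> real fls" where
  "euler_gf u k = fls_const ((-1) powi \<lfloor>u\<rfloor>) * fls_exp (frac u * k) / (fls_exp k + 1)"

lemma bern_gf_add_of_int: "bern_gf (u + of_int m) k = bern_gf u k"
  by (simp add: bern_gf_def)

lemma bern_gf_multiplication:
  fixes N :: int
  assumes "N > 0" "k \<noteq> 0"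
  shows "(\<Sum>j\<in>{0..<N}. bern_gf ((w + of_int j) / of_int N) (of_int N * k)) = bern_gf w k"
proof -
  define D where "D = fls_exp (of_int N * k) - 1"
  have "D \<noteq> 0"
    using assms fls_exp_neq_1[of "of_int N * k"] by (simp add: D_def)
  have "(\<Sum>j\<in>{0..<N}. bern_gf ((w + of_int j) / of_int N) (of_int N * k))
      = (\<Sum>j\<in>{0..<N}. fls_exp ((of_int N * frac ((w + of_int j) / of_int N)) * k) / D)"
    by (simp add: bern_gf_def D_def mult_ac)
  also have "\<dots> = (\<Sum>r\<in>{0..<N}. fls_exp ((frac w + of_int r) * k) / D)"
    using sum_frac_shift_divide[OF assms(1), of "\<lambda>_ v. fls_exp (v * k) / D" w] by simp
  also have "\<dots> = (\<Sum>i<nat N. fls_exp ((frac w + of_nat i) * k) / D)"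
    using assms(1) by (simp add: sum_int_atLeastLessThan)
  also have "\<dots> = fls_exp (frac w * k) * (\<Sum>i<nat N. fls_exp k ^ i) / D"
    by (simp add: fls_exp_power fls_exp_add distrib_right sum_distrib_left sum_divide_distrib)
  also have "(\<Sum>i<nat N. fls_exp k ^ i) = D / (fls_exp k - 1)"
    using assms geometric_sum[OF fls_exp_neq_1[OF assms(2)], of "nat N"]
    by (simp add: fls_exp_power D_def)
  finally show ?thesis
    using \<open>D \<noteq> 0\<close> by (simp add: bern_gf_def)
qed

lemma bern_gf_multiplication_left:
  fixes N :: int
  assumes "N > 0" "k \<noteq> 0"
  shows "(\<Sum>j\<in>{0..<N}. bern_gf ((of_int j + x) / of_int N - r) (of_int N * k))
    = bern_gf (x - of_int N * r) k"
proof -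
  have "(of_int j + x) / of_int N - r = (x - of_int N * r + of_int j) / of_int N" for j
    using assms(1) by (simp add: field_simps)
  then show ?thesis
    using bern_gf_multiplication[OF assms] by simp
qed

lemma bern_gf_multiplication_right:
  fixes N :: int
  assumes "N > 0" "k \<noteq> 0"
  shows "(\<Sum>j\<in>{0..<N}. bern_gf (r - (of_int j + y) / of_int N) (- (of_int N * k)))
    = bern_gf (of_int N * r - y) (- k)"
proof -
  have "(\<Sum>j\<in>{0..<N}. bern_gf (r - (of_int j + y) / of_int N) (of_int N * - k))
      = (\<Sum>j\<in>{0..<N}.
          bern_gf ((of_int N * r - y + of_int (1 - N) + of_int j) / of_int N) (of_int N * - k))"
    by (rule sum.reindex_bij_witness[where i = "\<lambda>j. N - 1 - j" and j = "\<lambda>j. N - 1 - j"])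
      (use assms in \<open>auto simp: field_simps\<close>)
  also have "\<dots> = bern_gf (of_int N * r - y + of_int (1 - N)) (- k)"
    using assms by (intro bern_gf_multiplication) auto
  also have "\<dots> = bern_gf (of_int N * r - y) (- k)"
    by (rule bern_gf_add_of_int)
  finally show ?thesis
    by simp
qed

lemma euler_gf_alternating:
  fixes c :: int
  assumes "c > 0" "even c" "k \<noteq> 0"
  shows "(\<Sum>\<mu>\<in>{0..<c}. fls_const ((-1) powi \<mu>) * bern_gf ((of_int \<mu> + w) / of_int c) (of_int c * k))
    = - euler_gf w k"
proof -
  define D where "D = fls_exp (of_int c * k) - 1"
  define s where "s = fls_const ((-1::real) powi \<lfloor>w\<rfloor>)"
  have "D \<noteq> 0"
    using assms fls_exp_neq_1[of "of_int c * k"] by (simp add: D_def)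
  have sign: "fls_const ((-1::real) powi \<mu>) = s * fls_const ((-1) powi ((\<lfloor>w\<rfloor> + \<mu>) mod c))" for \<mu>
    unfolding s_def fls_const_mult_const
    by (subst minus_one_power_int_mod_even[OF assms(2)]) (rule refl)
  have "(\<Sum>\<mu>\<in>{0..<c}. fls_const ((-1) powi \<mu>) * bern_gf ((of_int \<mu> + w) / of_int c) (of_int c * k))
      = s / D * (\<Sum>\<mu>\<in>{0..<c}. fls_const ((-1) powi ((\<lfloor>w\<rfloor> + \<mu>) mod c))
            * fls_exp ((of_int c * frac ((w + of_int \<mu>) / of_int c)) * k))"
    unfolding sum_distrib_left
    by (intro sum.cong refl) (subst sign, simp add: bern_gf_def D_def algebra_simps)
  also have "\<dots> = s / D * (\<Sum>r\<in>{0..<c}. fls_const ((-1) powi r) * fls_exp ((frac w + of_int r) * k))"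
    using sum_frac_shift_divide[OF assms(1), of "\<lambda>r v. fls_const ((-1) powi r) * fls_exp (v * k)" w]
    by simp
  also have "(\<Sum>r\<in>{0..<c}. fls_const ((-1) powi r) * fls_exp ((frac w + of_int r) * k))
      = (\<Sum>i<nat c. (-1) ^ i * fls_exp ((frac w + of_nat i) * k))"
    using assms(1) by (simp add: sum_int_atLeastLessThan power_int_of_nat fls_const_power)
  also have "\<dots> = fls_exp (frac w * k) * (\<Sum>i<nat c. (- fls_exp k) ^ i)"
    by (simp add: sum_distrib_left power_minus' fls_exp_power mult.left_commute distrib_right
        flip: fls_exp_add)
  also have "(\<Sum>i<nat c. (- fls_exp k) ^ i) = - D / (fls_exp k + 1)"
  proof -
    have nz: "fls_exp k + 1 \<noteq> 0"
      by (rule fls_exp_add_1_neq_0)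
    then have "- fls_exp k \<noteq> 1"
      by (metis add.inverse_inverse eq_neg_iff_add_eq_0)
    with nz show ?thesis
      using assms geometric_sum[of "- fls_exp k" "nat c"]
      by (simp add: fls_exp_power D_def even_nat_iff field_simps)
  qed
  also have "s / D * (fls_exp (frac w * k) * (- D / (fls_exp k + 1))) = - euler_gf w k"
    using \<open>D \<noteq> 0\<close> by (simp add: euler_gf_def s_def)
  finally show ?thesis .
qed

lemma bern_gf_product:
  assumes "A \<noteq> 0" "B \<noteq> 0" "A + B \<noteq> 0"
  shows "bern_gf s A * bern_gf t B
    = bern_gf (s - t) A * bern_gf t (A + B) - bern_gf (s - t) (- B) * bern_gf s (A + B)"
proof -
  define P Q where "P = fls_exp A" and "Q = fls_exp B"
  obtain \<epsilon> :: real where d: "frac (s - t) = frac s - frac t + \<epsilon>" and "\<epsilon> = 0 \<or> \<epsilon> = 1"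
    by (metis frac_diff_neg frac_diff_pos add.right_neutral add.commute add_diff_eq not_le)
  then have "fls_exp (\<epsilon> * A) = 1 \<and> fls_exp (\<epsilon> * B) = 1 \<or> fls_exp (\<epsilon> * A) = P \<and> fls_exp (\<epsilon> * B) = Q"
    by (auto simp: P_def Q_def)
  moreover have "P \<noteq> 1" "Q \<noteq> 1" "P * Q \<noteq> 1" "Q \<noteq> 0"
    using assms fls_exp_neq_1 by (auto simp: P_def Q_def simp flip: fls_exp_add)
  ultimately have "bern_gf s A * bern_gf t B
      = fls_exp (frac s * A) * fls_exp (\<epsilon> * A) / fls_exp (frac t * A) / (P - 1)
          * (fls_exp (frac t * A) * fls_exp (frac t * B) / (P * Q - 1))
        - fls_exp (frac t * B) / (fls_exp (frac s * B) * fls_exp (\<epsilon> * B)) / (1 / Q - 1)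
          * (fls_exp (frac s * A) * fls_exp (frac s * B) / (P * Q - 1))"
    unfolding bern_gf_def P_def [symmetric] Q_def [symmetric]
    by (rule partial_fraction_product) simp_all
  also have "\<dots> = bern_gf (s - t) A * bern_gf t (A + B) - bern_gf (s - t) (- B) * bern_gf s (A + B)"
    using fls_exp_diff[of 0 B]
    by (simp add: bern_gf_def d P_def Q_def algebra_simps flip: fls_exp_add fls_exp_diff)
  finally show ?thesis .
qed

section \<open>The reciprocity law for generating functions\<close>

lemma bern_gf_product_expansion:
  fixes a b :: int and w x y \<alpha> \<beta> :: real
  assumes "a > 0" "b > 0" "\<alpha> \<noteq> 0" "\<beta> \<noteq> 0" "of_int a * \<alpha> + of_int b * \<beta> \<noteq> 0"
  shows "bern_gf (of_int a * w + x) \<alpha> * bern_gf (of_int b * w + y) \<beta>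
    = (\<Sum>k\<in>{0..<a}. \<Sum>l\<in>{0..<b}.
        bern_gf ((of_int k + x) / of_int a - (of_int l + y) / of_int b) (of_int a * \<alpha>)
          * bern_gf (w + (of_int l + y) / of_int b) (of_int a * \<alpha> + of_int b * \<beta>)
      - bern_gf ((of_int k + x) / of_int a - (of_int l + y) / of_int b) (- (of_int b * \<beta>))
          * bern_gf (w + (of_int k + x) / of_int a) (of_int a * \<alpha> + of_int b * \<beta>))"
    (is "_ = ?rhs")
proof -
  have "w + (of_int k + x) / of_int a = (of_int a * w + x + of_int k) / of_int a"
    "w + (of_int l + y) / of_int b = (of_int b * w + y + of_int l) / of_int b" for k l
    using assms by (simp_all add: field_simps)
  then have "bern_gf (of_int a * w + x) \<alpha> * bern_gf (of_int b * w + y) \<beta>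
      = (\<Sum>k\<in>{0..<a}. bern_gf (w + (of_int k + x) / of_int a) (of_int a * \<alpha>))
        * (\<Sum>l\<in>{0..<b}. bern_gf (w + (of_int l + y) / of_int b) (of_int b * \<beta>))"
    using assms by (simp add: bern_gf_multiplication)
  also have "\<dots> = ?rhs"
    unfolding sum_product using assms
    by (intro sum.cong refl) (simp add: bern_gf_product[of "of_int a * \<alpha>" "of_int b * \<beta>"])
  finally show ?thesis .
qed

lemma bern_gf_reciprocity:
  fixes a b c :: int and x y z \<alpha> \<beta> :: real
  assumes "a > 0" "b > 0" "c > 0" "even c" "\<alpha> \<noteq> 0" "\<beta> \<noteq> 0" "of_int a * \<alpha> + of_int b * \<beta> \<noteq> 0"
  shows "(\<Sum>\<mu>\<in>{0..<c}. fls_const ((-1) powi \<mu>)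
            * (bern_gf (of_int a * (of_int \<mu> + z) / of_int c + x) \<alpha>
              * bern_gf (of_int b * (of_int \<mu> + z) / of_int c + y) \<beta>))
    = - (\<Sum>l\<in>{0..<b}. bern_gf (x - of_int a * (of_int l + y) / of_int b) \<alpha>
            * euler_gf (of_int c * (of_int l + y) / of_int b + z)
                ((of_int a * \<alpha> + of_int b * \<beta>) / of_int c))
      + (\<Sum>k\<in>{0..<a}. bern_gf (of_int b * (of_int k + x) / of_int a - y) (- \<beta>)
            * euler_gf (of_int c * (of_int k + x) / of_int a + z)
                ((of_int a * \<alpha> + of_int b * \<beta>) / of_int c))"
proof -
  define K where "K = of_int a * \<alpha> + of_int b * \<beta>"
  define d where "d k l = (of_int k + x) / of_int a - (of_int l + y) / of_int b" for k l :: int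
  define sg :: "int \<Rightarrow> real fls" where "sg \<mu> = fls_const ((-1) powi \<mu>)" for \<mu>
  define e where "e r = (\<Sum>\<mu>\<in>{0..<c}. sg \<mu> * bern_gf ((of_int \<mu> + z) / of_int c + r) K)" for r
  have nz: "real_of_int a \<noteq> 0" "real_of_int b \<noteq> 0" "real_of_int c \<noteq> 0"
    using assms by auto
  have alternating: "e r = - euler_gf (of_int c * r + z) (K / of_int c)" for r
  proof -
    have "(of_int \<mu> + z) / of_int c + r = (of_int \<mu> + (of_int c * r + z)) / of_int c" for \<mu>
      using nz by (simp add: field_simps)
    moreover have "K = of_int c * (K / of_int c)" "K / of_int c \<noteq> 0"
      using nz assms(7) by (simp_all add: K_def)
    ultimately show ?thesis
      unfolding e_def sg_def using assms(3,4)
      by (metis (no_types, lifting) euler_gf_alternating sum.cong)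
  qed
  have "(\<Sum>\<mu>\<in>{0..<c}. sg \<mu> * (bern_gf (of_int a * (of_int \<mu> + z) / of_int c + x) \<alpha>
          * bern_gf (of_int b * (of_int \<mu> + z) / of_int c + y) \<beta>))
      = (\<Sum>\<mu>\<in>{0..<c}. sg \<mu> * (\<Sum>k\<in>{0..<a}. \<Sum>l\<in>{0..<b}.
          bern_gf (d k l) (of_int a * \<alpha>)
            * bern_gf ((of_int \<mu> + z) / of_int c + (of_int l + y) / of_int b) K
        - bern_gf (d k l) (- (of_int b * \<beta>))
            * bern_gf ((of_int \<mu> + z) / of_int c + (of_int k + x) / of_int a) K))"
    using bern_gf_product_expansion[OF assms(1,2,5-7),
        where w = "(of_int _ + z) / of_int c" and x = x and y = y]
    by (simp add: K_def d_def)
  also have "\<dots> = (\<Sum>k\<in>{0..<a}. \<Sum>l\<in>{0..<b}.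
        bern_gf (d k l) (of_int a * \<alpha>) * e ((of_int l + y) / of_int b)
      - bern_gf (d k l) (- (of_int b * \<beta>)) * e ((of_int k + x) / of_int a))"
    unfolding e_def by (simp add: sum_distrib_left sum_subtractf algebra_simps sum.swap[of _ "{0..<c}"])
  also have "\<dots> = - (\<Sum>l\<in>{0..<b}. (\<Sum>k\<in>{0..<a}. bern_gf (d k l) (of_int a * \<alpha>))
          * euler_gf (of_int c * (of_int l + y) / of_int b + z) (K / of_int c))
      + (\<Sum>k\<in>{0..<a}. (\<Sum>l\<in>{0..<b}. bern_gf (d k l) (- (of_int b * \<beta>)))
          * euler_gf (of_int c * (of_int k + x) / of_int a + z) (K / of_int c))"
    by (simp add: alternating sum_subtractf sum_distrib_right sum_negf sum.swap[of _ "{0..<a}"])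
  also have "\<dots> = - (\<Sum>l\<in>{0..<b}. bern_gf (x - of_int a * (of_int l + y) / of_int b) \<alpha>
          * euler_gf (of_int c * (of_int l + y) / of_int b + z) (K / of_int c))
      + (\<Sum>k\<in>{0..<a}. bern_gf (of_int b * (of_int k + x) / of_int a - y) (- \<beta>)
          * euler_gf (of_int c * (of_int k + x) / of_int a + z) (K / of_int c))"
    using assms by (simp add: d_def bern_gf_multiplication_left bern_gf_multiplication_right)
  finally show ?thesis
    unfolding sg_def K_def .
qed

definition egf :: "(nat \<Rightarrow> 'a::field_char_0) \<Rightarrow> 'a \<Rightarrow> 'a fps" where
  "egf f k = Abs_fps (\<lambda>n. f n * k ^ n / fact n)"

lemma egf_mult_nth:
  "(egf f A * egf g B) $ n = (\<Sum>i\<le>n. f i * g (n - i) * A ^ i * B ^ (n - i) / (fact i * fact (n - i)))"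
  by (simp add: egf_def fps_mult_nth atLeast0AtMost mult_ac)

lemma bernpoly_egf_times: "Abs_fps (\<lambda>n. bernpoly n x / fact n) * (fps_exp 1 - 1) = fps_X * fps_exp x"
proof -
  have "Abs_fps (\<lambda>n. bernpoly n x / fact n) = fps_X * fps_exp x / (fps_exp 1 - 1)"
    by (simp add: bernpoly_def fps_eq_iff)
  moreover have "(fps_exp 1 - 1 :: real fps) $ 1 \<noteq> 0"
    by simp
  then have "fps_exp 1 - 1 \<noteq> (0 :: real fps)" "subdegree (fps_exp 1 - 1 :: real fps) \<le> 1"
    by (metis fps_zero_nth, rule subdegree_leI)
  ultimately show ?thesis
    by (simp add: fps_times_divide_eq)
qed

lemma eulerpoly_egf_times: "Abs_fps (\<lambda>n. eulerpoly n x / fact n) * (fps_exp 1 + 1) = 2 * fps_exp x"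
proof -
  have "Abs_fps (\<lambda>n. eulerpoly n x / fact n) = 2 * fps_exp x / (fps_exp 1 + 1)"
    by (simp add: eulerpoly_def fps_eq_iff)
  moreover have "(fps_exp 1 + 1 :: real fps) $ 0 \<noteq> 0"
    by simp
  then have "fps_exp 1 + 1 \<noteq> (0 :: real fps)" "subdegree (fps_exp 1 + 1 :: real fps) = 0"
    by (metis fps_zero_nth, simp add: subdegree_eq_0_iff)
  ultimately show ?thesis
    by (simp add: fps_times_divide_eq)
qed

lemma fps_to_fls_egf_bernfun:
  assumes "k \<noteq> 0"
  shows "fps_to_fls (egf (\<lambda>n. bernfun n u) k) = fls_const k * fls_X * bern_gf u k"
proof -
  define L where "L = fps_const k * fps_X"
  have "egf (\<lambda>n. bernfun n u) k = Abs_fps (\<lambda>n. bernpoly n (frac u) / fact n) oo L"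
    by (simp add: egf_def L_def fps_compose_linear bernfun_def frac_def fps_eq_iff)
  then have "egf (\<lambda>n. bernfun n u) k * (fps_exp k - 1) = L * fps_exp (k * frac u)"
    using arg_cong[OF bernpoly_egf_times, of "\<lambda>G. G oo L"]
    by (simp add: L_def fps_compose_mult_distrib fps_compose_sub_distrib fps_exp_compose_linear
        fps_X_fps_compose_startby0)
  then have "fps_to_fls (egf (\<lambda>n. bernfun n u) k * (fps_exp k - 1))
      = fps_to_fls (L * fps_exp (k * frac u))"
    by (rule arg_cong)
  then have "fps_to_fls (egf (\<lambda>n. bernfun n u) k) * (fls_exp k - 1)
      = fls_const k * fls_X * fls_exp (frac u * k)"
    by (simp add: fls_exp_def L_def fls_times_fps_to_fls fps_to_fls_minus mult.commute)
  then show ?thesis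
    using fls_exp_neq_1[OF assms] by (simp add: bern_gf_def field_simps)
qed

lemma fps_to_fls_egf_eulerfun:
  "fps_to_fls (egf (\<lambda>n. eulerfun n u) k) = fls_const 2 * euler_gf u k"
proof -
  define L where "L = fps_const k * fps_X"
  have "egf (\<lambda>n. eulerfun n u) k
      = fps_const ((-1) powi \<lfloor>u\<rfloor>) * (Abs_fps (\<lambda>n. eulerpoly n (frac u) / fact n) oo L)"
    by (simp add: egf_def L_def fps_compose_linear eulerfun_def frac_def fps_eq_iff)
  moreover have "(Abs_fps (\<lambda>n. eulerpoly n (frac u) / fact n) oo L) * (fps_exp k + 1)
      = 2 * fps_exp (k * frac u)"
    using arg_cong[OF eulerpoly_egf_times, of "\<lambda>G. G oo L"]
    by (simp add: L_def fps_compose_mult_distrib fps_compose_add_distrib)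
  ultimately have "fps_to_fls (egf (\<lambda>n. eulerfun n u) k * (fps_exp k + 1))
      = fps_to_fls (fps_const ((-1) powi \<lfloor>u\<rfloor>) * (2 * fps_exp (k * frac u)))"
    by (simp add: mult.assoc)
  then have "fps_to_fls (egf (\<lambda>n. eulerfun n u) k) * (fls_exp k + 1)
      = 2 * fls_const ((-1) powi \<lfloor>u\<rfloor>) * fls_exp (frac u * k)"
    by (simp add: fls_exp_def fls_times_fps_to_fls mult.commute mult.left_commute)
  then show ?thesis
    using fls_exp_add_1_neq_0[of k] by (simp add: euler_gf_def field_simps)
qed

lemma fps_to_fls_egf_bernfun_times_bernfun:
  assumes "\<alpha> \<noteq> 0" "\<beta> \<noteq> 0"
  shows "fps_to_fls (egf (\<lambda>n. bernfun n u) \<alpha> * egf (\<lambda>n. bernfun n v) \<beta>)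
    = fls_const (\<alpha> * \<beta>) * fls_X * fls_X * (bern_gf u \<alpha> * bern_gf v \<beta>)"
  using assms
  by (simp add: fls_times_fps_to_fls fps_to_fls_egf_bernfun mult_ac flip: fls_const_mult_const)

lemma fps_to_fls_egf_bernfun_times_eulerfun:
  assumes "\<alpha> \<noteq> 0"
  shows "fps_to_fls (egf (\<lambda>n. bernfun n u) \<alpha> * egf (\<lambda>n. eulerfun n w) \<gamma>)
    = fls_const (2 * \<alpha>) * fls_X * (bern_gf u \<alpha> * euler_gf w \<gamma>)"
  using assms
  by (simp add: fls_times_fps_to_fls fps_to_fls_egf_bernfun fps_to_fls_egf_eulerfun mult_ac
      flip: fls_const_mult_const)

lemma egf_reciprocity:
  fixes a b c :: int and x y z \<alpha> \<beta> :: real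
  assumes "a > 0" "b > 0" "c > 0" "even c" "\<alpha> \<noteq> 0" "\<beta> \<noteq> 0" "of_int a * \<alpha> + of_int b * \<beta> \<noteq> 0"
  shows "(\<Sum>\<mu>\<in>{0..<c}. fps_const ((-1) powi \<mu>)
            * (egf (\<lambda>n. bernfun n (of_int a * (of_int \<mu> + z) / of_int c + x)) \<alpha>
              * egf (\<lambda>n. bernfun n (of_int b * (of_int \<mu> + z) / of_int c + y)) \<beta>))
    = fps_const (- \<beta> / 2) * fps_X * (\<Sum>l\<in>{0..<b}.
            egf (\<lambda>n. bernfun n (x - of_int a * (of_int l + y) / of_int b)) \<alpha>
            * egf (\<lambda>n. eulerfun n (of_int c * (of_int l + y) / of_int b + z))
                ((of_int a * \<alpha> + of_int b * \<beta>) / of_int c))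
      + fps_const (- \<alpha> / 2) * fps_X * (\<Sum>k\<in>{0..<a}.
            egf (\<lambda>n. bernfun n (of_int b * (of_int k + x) / of_int a - y)) (- \<beta>)
            * egf (\<lambda>n. eulerfun n (of_int c * (of_int k + x) / of_int a + z))
                ((of_int a * \<alpha> + of_int b * \<beta>) / of_int c))"
    (is "?lhs = ?rhs")
proof (rule fps_to_fls_eq_imp_fps_eq)
  define M where "M = fls_const (\<alpha> * \<beta>) * fls_X * fls_X"
  define \<gamma> where "\<gamma> = (of_int a * \<alpha> + of_int b * \<beta>) / of_int c"
  have scale: "fls_const (- \<beta> / 2) * fls_X * (fls_const (2 * \<alpha>) * fls_X * F) = - (M * F)"
    "fls_const (- \<alpha> / 2) * fls_X * (fls_const (2 * - \<beta>) * fls_X * F) = M * F" for F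
  proof -
    have ac: "p * fls_X * (q * fls_X * F) = p * q * (fls_X * fls_X * F)" for p q :: "real fls"
      by (simp only: mult_ac)
    have "fls_const (- \<beta> / 2) * fls_const (2 * \<alpha>) = - fls_const (\<alpha> * \<beta>)"
      "fls_const (- \<alpha> / 2) * fls_const (2 * - \<beta>) = fls_const (\<alpha> * \<beta>)"
      by (simp_all add: fls_const_mult_const mult.commute flip: fls_const_uminus)
    then show "fls_const (- \<beta> / 2) * fls_X * (fls_const (2 * \<alpha>) * fls_X * F) = - (M * F)"
      "fls_const (- \<alpha> / 2) * fls_X * (fls_const (2 * - \<beta>) * fls_X * F) = M * F"
      unfolding ac M_def by (simp_all add: mult.assoc)
  qed
  have lift: "fps_to_fls (fps_const r * f) = fls_const r * fps_to_fls f" for r :: real and f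
    by (simp add: fls_times_fps_to_fls)
  have lift_X: "fps_to_fls (fps_const r * fps_X * f) = fls_const r * fls_X * fps_to_fls f"
    for r :: real and f
    by (simp add: fls_times_fps_to_fls)
  have "- \<beta> \<noteq> 0"
    using assms by simp
  show "fps_to_fls ?lhs = fps_to_fls ?rhs"
    unfolding \<gamma>_def [symmetric] fps_to_fls_plus fps_to_fls_sum lift lift_X
      fps_to_fls_egf_bernfun_times_bernfun[OF assms(5,6)]
      fps_to_fls_egf_bernfun_times_eulerfun[OF assms(5)]
      fps_to_fls_egf_bernfun_times_eulerfun[OF \<open>- \<beta> \<noteq> 0\<close>] sum_distrib_left [symmetric] scale
    using arg_cong[OF bern_gf_reciprocity[OF assms, where x = x and y = y and z = z, folded \<gamma>_def],
        of "\<lambda>F. M * F"]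
    by (simp add: M_def sum_distrib_left algebra_simps)
qed

section \<open>Comparison of coefficients\<close>

lemma binomial_diff_div_fact:
  assumes "j \<le> p" "p \<le> m"
  shows "of_nat ((m - j) choose (p - j)) / fact (m - j)
    = (of_nat (Suc m - p) / (fact p * fact (Suc m - p)) * (of_nat (p choose j) * fact j)
        :: 'a::field_char_0)"
proof -
  obtain k where "m = p + k"
    using assms(2) le_Suc_ex by blast
  then have "Suc m - p = Suc k" "m - j - (p - j) = k" "p - j \<le> m - j"
    using assms by auto
  then show ?thesis
    using assms by (simp add: binomial_fact field_simps del: of_nat_Suc)
qed

lemma sum_mult_power_add_expand:
  fixes g :: "nat \<Rightarrow> 'a::field_char_0"
  shows "(\<Sum>j\<le>m. g j * A ^ j * B * (A + B) ^ (m - j) / fact (m - j))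
    = (\<Sum>p\<le>Suc m. of_nat (Suc m - p) / (fact p * fact (Suc m - p))
          * (\<Sum>j\<le>p. of_nat (p choose j) * fact j * g j) * A ^ p * B ^ (Suc m - p))"
proof -
  have "(\<Sum>j\<le>m. g j * A ^ j * B * (A + B) ^ (m - j) / fact (m - j))
      = (\<Sum>j\<le>m. \<Sum>r\<le>m - j.
          g j * of_nat ((m - j) choose r) / fact (m - j) * A ^ (j + r) * B ^ (Suc m - (j + r)))"
    unfolding binomial_ring sum_distrib_left sum_divide_distrib
    by (intro sum.cong refl) (simp add: Suc_diff_le power_add algebra_simps)
  also have "\<dots> = (\<Sum>p\<le>m. \<Sum>j\<le>p.
      g j * of_nat ((m - j) choose (p - j)) / fact (m - j) * A ^ p * B ^ (Suc m - p))"
  proof -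
    have "Sigma {..m} (\<lambda>j. {..m - j}) = {(j, r). j + r \<le> m}"
      by auto
    then show ?thesis
      by (simp add: sum.Sigma sum.triangle_reindex_eq)
  qed
  also have "\<dots> = (\<Sum>p\<le>m. of_nat (Suc m - p) / (fact p * fact (Suc m - p))
          * (\<Sum>j\<le>p. of_nat (p choose j) * fact j * g j) * A ^ p * B ^ (Suc m - p))"
    unfolding sum_distrib_left sum_distrib_right
    by (intro sum.cong refl)
      (simp only: atMost_iff times_divide_eq_right [symmetric] binomial_diff_div_fact,
        simp add: mult_ac)
  also have "\<dots> = (\<Sum>p\<le>Suc m. of_nat (Suc m - p) / (fact p * fact (Suc m - p))
          * (\<Sum>j\<le>p. of_nat (p choose j) * fact j * g j) * A ^ p * B ^ (Suc m - p))"
    by simp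
  finally show ?thesis .
qed

lemma sum_mult_power_add_expand_swap:
  fixes g :: "nat \<Rightarrow> 'a::field_char_0"
  shows "(\<Sum>j\<le>m. g j * B ^ j * A * (B + A) ^ (m - j) / fact (m - j))
    = (\<Sum>p\<le>Suc m. of_nat p / (fact p * fact (Suc m - p))
          * (\<Sum>j\<le>Suc m - p. of_nat ((Suc m - p) choose j) * fact j * g j) * A ^ p * B ^ (Suc m - p))"
  unfolding sum_mult_power_add_expand
  by (rule sum.reindex_bij_witness[where i = "\<lambda>p. Suc m - p" and j = "\<lambda>p. Suc m - p"])
    (auto simp: mult_ac)

lemma power_int_1_minus: "(x::'a::field) \<noteq> 0 \<Longrightarrow> x powi (1 - int j) = x / x ^ j"
  by (simp add: power_int_diff)

lemma power_int_minus_diff: "(x::'a::field) \<noteq> 0 \<Longrightarrow> j \<le> m \<Longrightarrow> x powi (int j - int m) = 1 / x ^ (m - j)"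
  by (simp add: power_int_diff power_int_minus of_nat_diff flip: power_int_of_nat)

lemma fps_const_X_mult_nth_Suc: "(fps_const (k::'a::comm_ring_1) * fps_X * f) $ Suc n = k * f $ n"
  by (simp add: mult.assoc fps_X_mult_nth)

lemma polyfun_eq_coeffs_on_positive:
  fixes c d :: "nat \<Rightarrow> real"
  assumes "\<And>x. x > 0 \<Longrightarrow> (\<Sum>i\<le>n. c i * x ^ i) = (\<Sum>i\<le>n. d i * x ^ i)" "k \<le> n"
  shows "c k = d k"
proof (rule ccontr)
  assume "c k \<noteq> d k"
  then have "finite {x. (\<Sum>i\<le>n. (c i - d i) * x ^ i) = 0}"
    using assms(2) polyfun_finite_roots[of "\<lambda>i. c i - d i" n] by auto
  moreover have "{0<..} \<subseteq> {x. (\<Sum>i\<le>n. (c i - d i) * x ^ i) = 0}"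
    using assms(1) by (auto simp: left_diff_distrib sum_subtractf)
  ultimately show False
    using infinite_Ioi[of "0::real"] finite_subset by blast
qed

lemma S2_egf_nth:
  "(\<Sum>\<mu>\<in>{0..<c}. fps_const ((-1) powi \<mu>)
      * (egf (\<lambda>n. bernfun n (of_int a * (of_int \<mu> + z) / of_int c + x)) \<alpha>
        * egf (\<lambda>n. bernfun n (of_int b * (of_int \<mu> + z) / of_int c + y)) \<beta>)) $ n
    = (\<Sum>i\<le>n. S2 i (n - i) a b c x y z * \<alpha> ^ i * \<beta> ^ (n - i) / (fact i * fact (n - i)))"
  unfolding fps_sum_nth fps_mult_left_const_nth egf_mult_nth S2_def sum_distrib_left
    sum_distrib_right sum_divide_distrib
  by (subst sum.swap) (simp add: mult_ac)

lemma S1_egf_nth: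
  "(\<Sum>l\<in>{0..<d}. egf (\<lambda>n. bernfun n (of_int e * (of_int l + y) / of_int d + x)) \<alpha>
      * egf (\<lambda>n. eulerfun n (of_int c * (of_int l + y) / of_int d + z)) \<gamma>) $ m
    = (\<Sum>j\<le>m. S1 (Suc m - j) j c e d z x y * \<alpha> ^ j * \<gamma> ^ (m - j) / (fact j * fact (m - j)))"
  unfolding fps_sum_nth egf_mult_nth S1_def sum_distrib_left sum_distrib_right sum_divide_distrib
  by (subst sum.swap) (simp add: mult_ac)

lemma S2_egf_nth_scaled:
  fixes a b :: int
  assumes "a \<noteq> 0" "b \<noteq> 0"
  shows "of_int a * of_int b * (\<Sum>\<mu>\<in>{0..<c}. fps_const ((-1) powi \<mu>)
      * (egf (\<lambda>n. bernfun n (of_int a * (of_int \<mu> + z) / of_int c + x)) (A / of_int a)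
        * egf (\<lambda>n. bernfun n (of_int b * (of_int \<mu> + z) / of_int c + y)) (B / of_int b))) $ n
    = (\<Sum>i\<le>n. real_of_int a powi (1 - int i) * real_of_int b powi (1 - int (n - i))
        * S2 i (n - i) a b c x y z
        / (fact i * fact (n - i)) * A ^ i * B ^ (n - i))"
  unfolding S2_egf_nth sum_distrib_left
  using assms by (intro sum.cong refl) (simp add: power_int_1_minus power_divide del: of_nat_diff)

definition S1_binomial_sum_a :: "int \<Rightarrow> int \<Rightarrow> int \<Rightarrow> real \<Rightarrow> real \<Rightarrow> real \<Rightarrow> nat \<Rightarrow> nat \<Rightarrow> real" where
  "S1_binomial_sum_a a b c x y z p q = (\<Sum>j=0..p. real (p choose j) * real_of_int a powi (1 - int j)
      * real_of_int c powi (1 + int j - int p - int q) * S1 (p + q - j) j c (- a) b z x y)"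

definition S1_binomial_sum_b :: "int \<Rightarrow> int \<Rightarrow> int \<Rightarrow> real \<Rightarrow> real \<Rightarrow> real \<Rightarrow> nat \<Rightarrow> nat \<Rightarrow> real" where
  "S1_binomial_sum_b a b c x y z p q = (\<Sum>h=0..q. real (q choose h) * (-1) ^ h
      * real_of_int b powi (1 - int h)
      * real_of_int c powi (1 + int h - int p - int q) * S1 (p + q - h) h c b a z (- y) x)"

lemma S1_binomial_sum_a_egf:
  fixes a b c :: int
  assumes "a \<noteq> 0" "b \<noteq> 0" "c \<noteq> 0"
  shows "of_int a * of_int b * (fps_const (- (B / of_int b) / 2) * fps_X
      * (\<Sum>l\<in>{0..<b}. egf (\<lambda>n. bernfun n (x - of_int a * (of_int l + y) / of_int b)) (A / of_int a)
        * egf (\<lambda>n. eulerfun n (of_int c * (of_int l + y) / of_int b + z)) ((A + B) / of_int c))) $ Suc m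
    = (\<Sum>i\<le>Suc m. - (real (Suc m - i) / 2) * S1_binomial_sum_a a b c x y z i (Suc m - i)
        / (fact i * fact (Suc m - i)) * A ^ i * B ^ (Suc m - i))"
    (is "?lhs = ?rhs")
proof -
  have S1_egf_nth_a: "(\<Sum>l\<in>{0..<b}. egf (\<lambda>n. bernfun n (x - of_int a * (of_int l + y) / of_int b)) \<alpha>
        * egf (\<lambda>n. eulerfun n (of_int c * (of_int l + y) / of_int b + z)) \<gamma>) $ m
      = (\<Sum>j\<le>m. S1 (Suc m - j) j c (- a) b z x y * \<alpha> ^ j * \<gamma> ^ (m - j) / (fact j * fact (m - j)))"
    for \<alpha> \<gamma>
    using S1_egf_nth[where e = "- a" and d = b and c = c and x = x and y = y and z = z] by simp
  define g where "g j = - (1 / 2) * of_int a powi (1 - int j) * of_int c powi (int j - int m)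
    * S1 (Suc m - j) j c (- a) b z x y / fact j" for j
  have "?lhs = (\<Sum>j\<le>m. g j * A ^ j * B * (A + B) ^ (m - j) / fact (m - j))"
    unfolding fps_const_X_mult_nth_Suc S1_egf_nth_a
    unfolding sum_distrib_left
    using assms
    by (intro sum.cong refl)
      (simp add: g_def power_int_1_minus power_int_minus_diff power_divide mult_ac)
  also have "\<dots> = (\<Sum>i\<le>Suc m. of_nat (Suc m - i) / (fact i * fact (Suc m - i))
          * (\<Sum>j\<le>i. of_nat (i choose j) * fact j * g j) * A ^ i * B ^ (Suc m - i))"
    by (rule sum_mult_power_add_expand)
  also have "\<dots> = ?rhs"
  proof -
    have "1 + int j - int i - int (Suc m - i) = int j - int m" "i + (Suc m - i) - j = Suc m - j"
      if "i \<le> Suc m" for i j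
      using that by auto
    then show ?thesis
      by (intro sum.cong refl)
        (simp add: S1_binomial_sum_a_def g_def atLeast0AtMost sum_distrib_left sum_divide_distrib
          sum_distrib_right mult_ac)
  qed
  finally show ?thesis .
qed

lemma S1_binomial_sum_b_egf:
  fixes a b c :: int
  assumes "a \<noteq> 0" "b \<noteq> 0" "c \<noteq> 0"
  shows "of_int a * of_int b * (fps_const (- (A / of_int a) / 2) * fps_X
      * (\<Sum>k\<in>{0..<a}. egf (\<lambda>n. bernfun n (of_int b * (of_int k + x) / of_int a - y)) (- (B / of_int b))
        * egf (\<lambda>n. eulerfun n (of_int c * (of_int k + x) / of_int a + z)) ((A + B) / of_int c))) $ Suc m
    = (\<Sum>i\<le>Suc m. - (real i / 2) * S1_binomial_sum_b a b c x y z i (Suc m - i)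
        / (fact i * fact (Suc m - i)) * A ^ i * B ^ (Suc m - i))"
    (is "?lhs = ?rhs")
proof -
  have S1_egf_nth_b: "(\<Sum>k\<in>{0..<a}. egf (\<lambda>n. bernfun n (of_int b * (of_int k + x) / of_int a - y)) \<beta>
        * egf (\<lambda>n. eulerfun n (of_int c * (of_int k + x) / of_int a + z)) \<gamma>) $ m
      = (\<Sum>h\<le>m. S1 (Suc m - h) h c b a z (- y) x * \<beta> ^ h * \<gamma> ^ (m - h) / (fact h * fact (m - h)))"
    for \<beta> \<gamma>
    using S1_egf_nth[where e = b and d = a and y = x and x = "- y" and c = c and z = z] by simp
  define g where "g h = - (1 / 2) * (-1) ^ h * of_int b powi (1 - int h) * of_int c powi (int h - int m)
    * S1 (Suc m - h) h c b a z (- y) x / fact h" for h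
  have "?lhs = (\<Sum>h\<le>m. g h * B ^ h * A * (B + A) ^ (m - h) / fact (m - h))"
    unfolding fps_const_X_mult_nth_Suc S1_egf_nth_b
    unfolding sum_distrib_left
    using assms
    by (intro sum.cong refl)
      (simp add: g_def power_int_1_minus power_int_minus_diff power_minus' power_divide
        add.commute mult_ac)
  also have "\<dots> = (\<Sum>i\<le>Suc m. of_nat i / (fact i * fact (Suc m - i))
          * (\<Sum>h\<le>Suc m - i. of_nat ((Suc m - i) choose h) * fact h * g h) * A ^ i * B ^ (Suc m - i))"
    by (rule sum_mult_power_add_expand_swap)
  also have "\<dots> = ?rhs"
  proof -
    have "1 + int h - int i - int (Suc m - i) = int h - int m" "i + (Suc m - i) - h = Suc m - h"
      if "i \<le> Suc m" for i h
      using that by auto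
    then show ?thesis
      by (intro sum.cong refl)
        (simp add: S1_binomial_sum_b_def g_def atLeast0AtMost sum_distrib_left sum_divide_distrib
          sum_distrib_right mult_ac)
  qed
  finally show ?thesis .
qed

(* The coefficient of X^(Suc m) in egf_reciprocity at alpha = A / a and beta = B / b,
   multiplied by a b. *)
lemma S2_reciprocity_homogeneous:
  fixes a b c :: int and x y z A B :: real
  assumes "a > 0" "b > 0" "c > 0" "even c" "A \<noteq> 0" "B \<noteq> 0" "A + B \<noteq> 0"
  shows "(\<Sum>i\<le>Suc m. real_of_int a powi (1 - int i) * real_of_int b powi (1 - int (Suc m - i))
        * S2 i (Suc m - i) a b c x y z / (fact i * fact (Suc m - i)) * A ^ i * B ^ (Suc m - i))
    = (\<Sum>i\<le>Suc m. (- (real (Suc m - i) / 2) * S1_binomial_sum_a a b c x y z i (Suc m - i)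
          - (real i / 2) * S1_binomial_sum_b a b c x y z i (Suc m - i))
        / (fact i * fact (Suc m - i)) * A ^ i * B ^ (Suc m - i))"
proof -
  have "A / of_int a \<noteq> 0" "B / of_int b \<noteq> 0"
    "of_int a * (A / of_int a) + of_int b * (B / of_int b) = A + B"
    using assms by auto
  note reciprocity = egf_reciprocity[OF assms(1-4) this(1,2), unfolded this(3), OF assms(7)]
  have "a \<noteq> 0" "b \<noteq> 0" "c \<noteq> 0"
    using assms by auto
  note nz = this
  show ?thesis
    unfolding S2_egf_nth_scaled[OF nz(1,2), symmetric] reciprocity fps_add_nth
      distrib_left [of "of_int a * of_int b"] S1_binomial_sum_a_egf[OF nz] S1_binomial_sum_b_egf[OF nz]
    by (simp only: sum.distrib [symmetric])
      (intro sum.cong refl, simp add: diff_divide_distrib ring_distribs)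
qed

theorem theorem4:
  fixes a b c :: int and p q :: nat and x y z :: real
  assumes "a > 0" and "b > 0" and "c > 0" and "even c"
    and "p \<ge> 1" and "q \<ge> 1"
  shows "real_of_int a powi (1 - int p) * real_of_int b powi (1 - int q) * S2 p q a b c x y z
    = - (real q / 2) * (\<Sum>j=0..p. real (p choose j) * real_of_int a powi (1 - int j)
            * real_of_int c powi (1 + int j - int p - int q)
            * S1 (p + q - j) j c (- a) b z x y)
      - (real p / 2) * (\<Sum>h=0..q. real (q choose h) * (-1) ^ h * real_of_int b powi (1 - int h)
            * real_of_int c powi (1 + int h - int p - int q)
            * S1 (p + q - h) h c b a z (- y) x)"
proof -
  obtain m where m: "p + q = Suc m"
    using assms(5) by (cases "p + q") auto
  define L where "L i = real_of_int a powi (1 - int i) * real_of_int b powi (1 - int (Suc m - i))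
    * S2 i (Suc m - i) a b c x y z / (fact i * fact (Suc m - i))" for i
  define R where "R i = (- (real (Suc m - i) / 2) * S1_binomial_sum_a a b c x y z i (Suc m - i)
    - (real i / 2) * S1_binomial_sum_b a b c x y z i (Suc m - i)) / (fact i * fact (Suc m - i))" for i
  have "L p = R p"
  proof (rule polyfun_eq_coeffs_on_positive)
    fix A :: real
    assume "A > 0"
    then show "(\<Sum>i\<le>Suc m. L i * A ^ i) = (\<Sum>i\<le>Suc m. R i * A ^ i)"
      using S2_reciprocity_homogeneous[OF assms(1-4), where A = A and B = 1 and m = m]
      by (simp add: L_def R_def)
  qed (use m in simp)
  moreover have "Suc m - p = q"
    using m by simp
  ultimately show ?thesis
    by (simp add: L_def R_def S1_binomial_sum_a_def S1_binomial_sum_b_def m)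
qed

end
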